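(* For any $j,j'\in\mathsf{R}'$, $j\ne j'$ implies $\mathrm{efull}(j)\ne\mathrm{efull}(j')$.
   Context: $T\in[0\mathinner{.\,.}\sigma)^n$ with $2\le\sigma<n^{1/7}$; $\tau=\lfloor\mu\log_\sigma n\rfloor$ for a fixed positive constant $\mu<1/6$ with $\tau\ge1$. $\mathrm{per}(S)$ is the shortest period of $S$. $\mathsf{R}=\{i\in[1\mathinner{.\,.}n-3\tau+2]:\mathrm{per}(T[i\mathinner{.\,.}i+3\tau-2])\le\tau/3\}$ and $\mathsf{R}'=\{j\in\mathsf{R}:j-1\notin\mathsf{R}\}$. For $j\in\mathsf{R}$: $\mathrm{end}(j)=\min\{j'\ge j:j'\notin\mathsf{R}\}+3\tau-2$; with $p=\mathrm{per}(T[j\mathinner{.\,.}j+3\tau-1))$, $\mathrm{Lroot}(j)=\min\{T[j+t\mathinner{.\,.}j+t+p):t\in[0\mathinner{.\,.}p)\}$ (lexicographic minimum); with $H=\mathrm{Lroot}(j)$, $T[j\mathinner{.\,.}\mathrm{end}(j))$ is uniquely written as $H'H^kH''$ with $H'$ a proper suffix and $H''$ a proper prefix of $H$, $\mathrm{Ltail}(j)=|H''|$, and $\mathrm{efull}(j)=\mathrm{end}(j)-\mathrm{Ltail}(j)$. *)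

theory Defs
  imports Complex_Main "HOL-Library.Sublist" "HOL-Library.List_Lexorder"
begin

text \<open>Strings are lists of naturals; positions are 1-based as in the paper.
  sub T i k is the fragment T[i..k), i.e. positions i,...,k-1.\<close>
definition sub :: "nat list \<Rightarrow> nat \<Rightarrow> nat \<Rightarrow> nat list" where
  "sub T i k = take (k - i) (drop (i - 1) T)"

definition per :: "nat list \<Rightarrow> nat" where
  "per S = (LEAST p. 0 < p \<and> (\<forall>i. i + p < length S \<longrightarrow> S ! i = S ! (i + p)))"

definition RR :: "nat list \<Rightarrow> nat \<Rightarrow> nat set" where
  "RR T \<tau> = {i. 1 \<le> i \<and> i + 3 * \<tau> \<le> length T + 2 \<and>
                  3 * per (sub T i (i + 3 * \<tau> - 1)) \<le> \<tau>}"

definition RR' :: "nat list \<Rightarrow> nat \<Rightarrow> nat set" where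
  "RR' T \<tau> = {j \<in> RR T \<tau>. j - 1 \<notin> RR T \<tau>}"

definition rend :: "nat list \<Rightarrow> nat \<Rightarrow> nat \<Rightarrow> nat" where
  "rend T \<tau> j = (LEAST j'. j \<le> j' \<and> j' \<notin> RR T \<tau>) + 3 * \<tau> - 2"

text \<open>Lyndon root: lexicographically minimal rotation (all candidates have length p).\<close>
definition Lroot :: "nat list \<Rightarrow> nat \<Rightarrow> nat \<Rightarrow> nat list" where
  "Lroot T \<tau> j = (let p = per (sub T j (j + 3 * \<tau> - 1)) in
      Min {sub T (j + t) (j + t + p) | t. t < p})"

definition Ltail :: "nat list \<Rightarrow> nat \<Rightarrow> nat \<Rightarrow> nat" where
  "Ltail T \<tau> j = (let H = Lroot T \<tau> j in
      THE l. \<exists>H' k H''. sub T j (rend T \<tau> j) = H' @ concat (replicate k H) @ H''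
               \<and> strict_suffix H' H \<and> strict_prefix H'' H \<and> length H'' = l)"

definition efull :: "nat list \<Rightarrow> nat \<Rightarrow> nat \<Rightarrow> nat" where
  "efull T \<tau> j = rend T \<tau> j - Ltail T \<tau> j"

end

theory Submission
  imports Defs
begin

text \<open>Let \<open>j < j'\<close> be run starts and let \<open>e\<close> be the first position after \<open>j\<close>
  outside \<open>RR\<close>; since \<open>j' - 1 \<notin> RR\<close>, \<open>e < j'\<close>. Then \<open>efull j \<le> end j = e + 3\<tau> - 2\<close>,
  while \<open>efull j' > end j' - per\<^sub>j'\<close>: the tail is a proper prefix of the Lyndon root,
  whose length is the minimal period of the run, and minimality makes the
  factorisation \<open>H' H\<^sup>k H''\<close> unique. Equality of the two values therefore forces the
  windows at \<open>e - 1\<close> and \<open>j'\<close> to overlap in at least the sum of their periods, so the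
  period of the window at \<open>e - 1\<close> extends one letter to the right and \<open>e \<in> RR\<close>, a
  contradiction.\<close>

text \<open>Positions in \<open>T ! x\<close> are 0-based and segments \<open>[a, b)\<close> half-open, whereas
  \<open>sub\<close> and \<open>RR\<close> are 1-based: the window \<open>sub T i (i + 3 * \<tau> - 1)\<close> at \<open>i\<close> is the
  segment \<open>[i - 1, i + 3 * \<tau> - 2)\<close>.\<close>
definition has_period_on :: "'a list \<Rightarrow> nat \<Rightarrow> nat \<Rightarrow> nat \<Rightarrow> bool" where
  "has_period_on T a b q \<longleftrightarrow> (\<forall>x. a \<le> x \<longrightarrow> x + q < b \<longrightarrow> T ! x = T ! (x + q))"

abbreviation has_period :: "'a list \<Rightarrow> nat \<Rightarrow> bool" where
  "has_period S q \<equiv> has_period_on S 0 (length S) q"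

lemma
  shows per_pos: "0 < per S" and has_period_per: "has_period S (per S)"
proof -
  have "0 < per S \<and> (\<forall>i. i + per S < length S \<longrightarrow> S ! i = S ! (i + per S))"
    unfolding per_def by (rule LeastI[of _ "max 1 (length S)"]) auto
  then show "0 < per S" "has_period S (per S)" unfolding has_period_on_def by auto
qed

lemma per_le: "0 < q \<Longrightarrow> has_period S q \<Longrightarrow> per S \<le> q"
  unfolding per_def has_period_on_def by (rule Least_le) auto

lemma has_period_take_drop_iff:
  assumes "b \<le> length T" "a \<le> b"
  shows "has_period (take (b - a) (drop a T)) q \<longleftrightarrow> has_period_on T a b q"
proof
  assume h: "has_period (take (b - a) (drop a T)) q"
  show "has_period_on T a b q" unfolding has_period_on_def
  proof (intro allI impI)
    fix x assume "a \<le> x" "x + q < b"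
    then show "T ! x = T ! (x + q)"
      using h assms unfolding has_period_on_def
      by (auto dest!: spec[of _ "x - a"] simp: add.commute add.left_commute)
  qed
next
  assume h: "has_period_on T a b q"
  show "has_period (take (b - a) (drop a T)) q" unfolding has_period_on_def
  proof (intro allI impI)
    fix i assume "0 \<le> i" "i + q < length (take (b - a) (drop a T))"
    then show "take (b - a) (drop a T) ! i = take (b - a) (drop a T) ! (i + q)"
      using h assms unfolding has_period_on_def
      by (auto dest!: spec[of _ "a + i"] simp: add.commute add.left_commute)
  qed
qed

lemma has_period_on_mono:
  "has_period_on T a b q \<Longrightarrow> a \<le> a' \<Longrightarrow> b' \<le> b \<Longrightarrow> has_period_on T a' b' q"
  unfolding has_period_on_def by auto

lemma has_period_take: "has_period S q \<Longrightarrow> has_period (take w S) q"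
  unfolding has_period_on_def by auto

lemma has_period_drop: "has_period S q \<Longrightarrow> has_period (drop t S) q"
  unfolding has_period_on_def by (auto simp: add.assoc)

lemma has_period_on_mult:
  "has_period_on T a b q \<Longrightarrow> a \<le> x \<Longrightarrow> x + c * q < b \<Longrightarrow> T ! x = T ! (x + c * q)"
proof (induction c)
  case 0
  then show ?case by simp
next
  case (Suc c)
  then have "T ! x = T ! (x + c * q)" by simp
  also have "\<dots> = T ! (x + c * q + q)"
    using Suc.prems unfolding has_period_on_def by auto
  finally show ?case by (simp add: algebra_simps)
qed

lemma has_period_on_mod_eq:
  assumes "has_period_on T a b q" "a \<le> x" "a \<le> y" "x < b" "y < b" "x mod q = y mod q"
  shows "T ! x = T ! y"
proof -
  have "T ! u = T ! v" if "a \<le> u" "u \<le> v" "v < b" "u mod q = v mod q" for u v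
  proof -
    have "q dvd v - u" using that mod_eq_dvd_iff_nat[of u v q] by simp
    then obtain c where "v - u = q * c" by blast
    then have "v = u + c * q" using that by (simp add: mult.commute)
    then show ?thesis using has_period_on_mult[OF assms(1) that(1)] that by simp
  qed
  then show ?thesis using assms by (metis nat_le_linear)
qed

text \<open>The new letter \<open>T ! b\<close> is reached from \<open>T ! (b - p)\<close> by the
  detour \<open>T ! (b - p) = T ! (b - p - q) = T ! (b - q) = T ! b\<close>, which stays
  inside the overlap of the two periodic segments.\<close>
lemma has_period_on_extend_right:
  assumes p: "has_period_on T a b p" and q: "has_period_on T s (b + 1) q"
    and "a \<le> s" "s + p + q \<le> b" "0 < q"
  shows "has_period_on T a (b + 1) p"
  unfolding has_period_on_def
proof (intro allI impI)
  fix x assume x: "a \<le> x" "x + p < b + 1"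
  show "T ! x = T ! (x + p)"
  proof (cases "x + p < b")
    case True
    then show ?thesis using p x unfolding has_period_on_def by auto
  next
    case False
    then have xb: "x = b - p" "x + p = b" using x by simp_all
    have "T ! (b - p) = T ! (b - p - q)"
      using q assms(3-5) unfolding has_period_on_def by (auto dest!: spec[of _ "b - p - q"])
    also have "\<dots> = T ! (b - q)"
      using p assms(3-5) unfolding has_period_on_def by (auto dest!: spec[of _ "b - q - p"])
    also have "\<dots> = T ! b"
      using q assms(3-5) unfolding has_period_on_def by (auto dest!: spec[of _ "b - q"])
    finally show ?thesis using xb by simp
  qed
qed

lemma concat_replicate_period:
  assumes "has_period X p" "k * p \<le> length X"
  shows "concat (replicate k (take p X)) = take (k * p) X"
  using assms(2)
proof (induction k)
  case 0
  then show ?case by simp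
next
  case (Suc k)
  have "take p (drop (k * p) X) = take p X"
  proof (rule nth_equalityI)
    show "length (take p (drop (k * p) X)) = length (take p X)" using Suc.prems by simp
    fix i assume "i < length (take p (drop (k * p) X))"
    then have "i < p" "i + k * p < length X" by auto
    then show "take p (drop (k * p) X) ! i = take p X ! i"
      using has_period_on_mult[OF assms(1), of i k] by (simp add: add.commute)
  qed
  then have "take (k * p + p) X = take (k * p) X @ take p X"
    by (simp only: take_add)
  then show ?case using Suc by (simp add: replicate_append_same[symmetric] add.commute)
qed

lemma has_period_of_equal_factors:
  assumes S: "has_period S p" and xy: "x < y" "y < p" "y + p \<le> length S"
    and eq: "take p (drop x S) = take p (drop y S)"
  shows "has_period S (y - x)"
  unfolding has_period_on_def
proof (intro allI impI)
  fix i assume i: "i + (y - x) < length S"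
  define u where "u = (i + p - x) mod p"
  have u: "u < p" using xy u_def by simp
  have "(x + u) mod p = (x + (i + p - x)) mod p" unfolding u_def by (simp add: mod_add_right_eq)
  also have "x + (i + p - x) = i + p" using xy by simp
  finally have m1: "(x + u) mod p = i mod p" by simp
  have "(y + u) mod p = (y + (i + p - x)) mod p" unfolding u_def by (simp add: mod_add_right_eq)
  also have "y + (i + p - x) = (i + (y - x)) + p" using xy by simp
  finally have m2: "(y + u) mod p = (i + (y - x)) mod p" by simp
  have "S ! i = S ! (x + u)"
    using has_period_on_mod_eq[OF S, of i "x + u"] m1 u xy i by simp
  also have "\<dots> = S ! (y + u)"
    using arg_cong[OF eq, of "\<lambda>w. w ! u"] u xy by simp
  also have "\<dots> = S ! (i + (y - x))"
    using has_period_on_mod_eq[OF S, of "y + u" "i + (y - x)"] m2 u xy i by simp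
  finally show "S ! i = S ! (i + (y - x))" .
qed

definition root_factorization :: "'a list \<Rightarrow> 'a list \<Rightarrow> nat \<Rightarrow> bool" where
  "root_factorization S H l \<longleftrightarrow> (\<exists>H' k H''. S = H' @ concat (replicate k H) @ H''
      \<and> strict_suffix H' H \<and> strict_prefix H'' H \<and> length H'' = l)"

lemma root_factorization_exists:
  assumes S: "has_period S p" and t: "t < p" "t + p \<le> length S"
  shows "root_factorization S (take p (drop t S)) ((length S - t) mod p)"
proof -
  define H where "H = take p (drop t S)"
  define k where "k = (length S - t) div p"
  define r where "r = (length S - t) mod p"
  have lenH: "length H = p" using H_def t by simp
  have r: "r < p" using t r_def by simp
  have kr: "t + k * p + r = length S" using t unfolding k_def r_def by simp
  have "concat (replicate k H) = take (k * p) (drop t S)"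
    unfolding H_def by (rule concat_replicate_period[OF has_period_drop[OF S]]) (use kr in simp)
  then have split: "S = take t S @ concat (replicate k H) @ drop (t + k * p) S"
    by (metis append_take_drop_id drop_drop add.commute)
  have "take t S = drop (p - t) H"
  proof (rule nth_equalityI)
    show "length (take t S) = length (drop (p - t) H)" using lenH t by simp
    fix i assume "i < length (take t S)"
    then show "take t S ! i = drop (p - t) H ! i"
      using S t unfolding H_def has_period_on_def by (auto simp: add.commute)
  qed
  then have suffix: "strict_suffix (take t S) H"
    using t lenH suffix_drop[of "p - t" H] unfolding strict_suffix_def by auto
  have "drop (t + k * p) S = take r H"
  proof (rule nth_equalityI)
    show "length (drop (t + k * p) S) = length (take r H)" using lenH r kr by simp
    fix i assume "i < length (drop (t + k * p) S)"
    then have "i < r" using kr by simp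
    then show "drop (t + k * p) S ! i = take r H ! i"
      using has_period_on_mult[OF S, of "t + i" k] r kr t unfolding H_def
      by (simp add: algebra_simps)
  qed
  then have prefix: "strict_prefix (drop (t + k * p) S) H"
    using r lenH take_is_prefix[of r H] unfolding strict_prefix_def by auto
  show ?thesis
    unfolding root_factorization_def H_def[symmetric] r_def[symmetric]
    using split suffix prefix kr by force
qed

text \<open>The offset of the first full copy of the root is forced: a second
  occurrence of the root less than \<open>per S\<close> away would yield a shorter period.\<close>
lemma root_factorization_unique:
  assumes len: "2 * per S \<le> length S" and t: "t < per S"
    and l: "root_factorization S (take (per S) (drop t S)) l"
  shows "l = (length S - t) mod per S"
proof -
  define p where "p = per S"
  define H where "H = take p (drop t S)"
  have S: "has_period S p" using has_period_per p_def by simp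
  have lenH: "length H = p" using H_def t len p_def by simp
  obtain A k B where d: "S = A @ concat (replicate k H) @ B" "strict_suffix A H"
      "strict_prefix B H" "length B = l"
    using l unfolding root_factorization_def H_def p_def by blast
  have A: "length A < p" using d(2) lenH unfolding strict_suffix_def suffix_def by auto
  have B: "length B < p" using d(3) lenH prefix_length_less by blast
  have lS: "length S = length A + k * p + length B"
    using d(1) lenH by (simp add: length_concat sum_list_replicate)
  then obtain k' where k': "k = Suc k'" using A B len p_def by (cases k) auto
  have H_at_A: "take p (drop (length A) S) = H" using d(1) k' lenH by simp
  have no_shift: "\<not> has_period S d" if "0 < d" "d < p" for d
    using per_le[of d S] that unfolding p_def by (meson not_le)
  have "length A = t"
  proof (rule linorder_cases[of "length A" t])
    assume "length A < t"
    then have "has_period S (t - length A)"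
      by (intro has_period_of_equal_factors[OF S]) (use len t H_at_A H_def p_def in auto)
    then show ?thesis using no_shift \<open>length A < t\<close> t p_def by simp
  next
    assume "t < length A"
    then have "has_period S (length A - t)"
      by (intro has_period_of_equal_factors[OF S]) (use len A H_at_A H_def p_def in auto)
    then show ?thesis using no_shift \<open>t < length A\<close> A by simp
  qed
  then have "length S - t = l + k * p" using lS d(4) by simp
  then show ?thesis using B d(4) p_def by simp
qed

lemma the_root_factorization:
  assumes "2 * per S \<le> length S" "t < per S"
  shows "(THE l. root_factorization S (take (per S) (drop t S)) l) = (length S - t) mod per S"
proof (rule the_equality)
  show "root_factorization S (take (per S) (drop t S)) ((length S - t) mod per S)"
    using root_factorization_exists[OF has_period_per] assms by simp
qed (use root_factorization_unique assms in blast)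

lemma has_period_sub_iff:
  assumes "1 \<le> i" "i \<le> k" "k \<le> length T + 1"
  shows "has_period (sub T i k) q \<longleftrightarrow> has_period_on T (i - 1) (k - 1) q"
proof -
  have "sub T i k = take ((k - 1) - (i - 1)) (drop (i - 1) T)"
    unfolding sub_def using assms(1) by simp
  then show ?thesis using has_period_take_drop_iff[of "k - 1" T "i - 1"] assms by simp
qed

lemma length_sub: "1 \<le> i \<Longrightarrow> k \<le> length T + 1 \<Longrightarrow> length (sub T i k) = k - i"
  by (simp add: sub_def)

lemma take_sub: "m \<le> k \<Longrightarrow> take (m - i) (sub T i k) = sub T i m"
  by (simp add: sub_def min_def)

lemma take_drop_sub:
  assumes "1 \<le> i" "t + p \<le> k - i"
  shows "take p (drop t (sub T i k)) = sub T (i + t) (i + t + p)"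
proof -
  have "take p (drop t (sub T i k)) = take (min p (k - i - t)) (drop (i - 1 + t) T)"
    by (simp add: sub_def drop_take take_take add.commute)
  also have "min p (k - i - t) = p" using assms(2) by simp
  finally show ?thesis unfolding sub_def using assms(1) by simp
qed

lemma has_period_window_iff:
  assumes "1 \<le> i" "1 \<le> \<tau>" "i + 3 * \<tau> \<le> length T + 2"
  shows "has_period (sub T i (i + 3 * \<tau> - 1)) q \<longleftrightarrow> has_period_on T (i - 1) (i + 3 * \<tau> - 2) q"
proof -
  have "i + 3 * \<tau> - 1 - 1 = i + 3 * \<tau> - 2" by simp
  then show ?thesis using has_period_sub_iff[of i "i + 3 * \<tau> - 1" T q] assms by simp
qed

abbreviation window_per :: "nat list \<Rightarrow> nat \<Rightarrow> nat \<Rightarrow> nat" where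
  "window_per T \<tau> i \<equiv> per (sub T i (i + 3 * \<tau> - 1))"

lemma RR_window_period:
  assumes "i \<in> RR T \<tau>"
  shows "has_period_on T (i - 1) (i + 3 * \<tau> - 2) (window_per T \<tau> i)"
    and "0 < window_per T \<tau> i" and "3 * window_per T \<tau> i \<le> \<tau>" and "1 \<le> \<tau>"
proof -
  show p0: "0 < window_per T \<tau> i" by (rule per_pos)
  show p3: "3 * window_per T \<tau> i \<le> \<tau>" using assms by (simp add: RR_def)
  show "1 \<le> \<tau>" using p0 p3 by linarith
  then show "has_period_on T (i - 1) (i + 3 * \<tau> - 2) (window_per T \<tau> i)"
    using has_period_window_iff[of i \<tau> T] has_period_per[of "sub T i (i + 3 * \<tau> - 1)"] assms
    by (simp add: RR_def)
qed

lemma window_per_le: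
  assumes "1 \<le> i" "i + 3 * \<tau> \<le> length T + 2" "1 \<le> \<tau>" "0 < q"
    and "has_period_on T (i - 1) (i + 3 * \<tau> - 2) q"
  shows "window_per T \<tau> i \<le> q"
  using per_le[OF assms(4)] has_period_window_iff[of i \<tau> T q] assms by simp

text \<open>As both periods are at most \<open>\<tau> / 3\<close>, the hypothesis \<open>i' < i + window_per T \<tau> i'\<close>
  makes the windows at \<open>i\<close> and \<open>i'\<close> overlap in at least the sum of their periods, so the
  period of the left window propagates one letter to the right.\<close>
lemma Suc_in_RR_of_overlap:
  assumes i: "i \<in> RR T \<tau>" and i': "i' \<in> RR T \<tau>"
    and "i < i'" "i' < i + window_per T \<tau> i'"
  shows "Suc i \<in> RR T \<tau>"
proof -
  let ?p = "window_per T \<tau> i" and ?q = "window_per T \<tau> i'"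
  note p = RR_window_period[OF i] and q = RR_window_period[OF i']
  have "has_period_on T (i' - 1) (i + 3 * \<tau> - 2 + 1) ?q"
    by (rule has_period_on_mono[OF q(1)]) (use assms q(4) in auto)
  then have "has_period_on T (i - 1) (i + 3 * \<tau> - 2 + 1) ?p"
    by (rule has_period_on_extend_right[OF p(1)]) (use assms p q in auto)
  then have "has_period_on T (Suc i - 1) (Suc i + 3 * \<tau> - 2) ?p"
    by (rule has_period_on_mono) (use p in auto)
  moreover have "Suc i + 3 * \<tau> \<le> length T + 2"
    using i' \<open>i < i'\<close> by (simp add: RR_def)
  ultimately have "window_per T \<tau> (Suc i) \<le> ?p"
    using window_per_le[of "Suc i" \<tau> T ?p] p by simp
  then show ?thesis using p(3) \<open>Suc i + 3 * \<tau> \<le> length T + 2\<close> by (simp add: RR_def)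
qed

definition run_end :: "nat list \<Rightarrow> nat \<Rightarrow> nat \<Rightarrow> nat" where
  "run_end T \<tau> j = (LEAST j'. j \<le> j' \<and> j' \<notin> RR T \<tau>)"

lemma rend_eq_run_end: "rend T \<tau> j = run_end T \<tau> j + 3 * \<tau> - 2"
  by (simp add: rend_def run_end_def)

lemma
  shows run_end_ge: "j \<le> run_end T \<tau> j" and run_end_notin_RR: "run_end T \<tau> j \<notin> RR T \<tau>"
proof -
  have "j \<le> j + length T + 3 \<and> j + length T + 3 \<notin> RR T \<tau>" by (auto simp: RR_def)
  then have "j \<le> run_end T \<tau> j \<and> run_end T \<tau> j \<notin> RR T \<tau>"
    unfolding run_end_def by (rule LeastI)
  then show "j \<le> run_end T \<tau> j" "run_end T \<tau> j \<notin> RR T \<tau>" by auto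
qed

lemma in_RR_before_run_end: "j \<le> i \<Longrightarrow> i < run_end T \<tau> j \<Longrightarrow> i \<in> RR T \<tau>"
  unfolding run_end_def using not_less_Least by blast

lemma run_end_gt: "j \<in> RR T \<tau> \<Longrightarrow> j < run_end T \<tau> j"
  using run_end_ge[of j T \<tau>] run_end_notin_RR[of T \<tau> j] by (metis le_neq_implies_less)

lemma run_end_less_RR':
  assumes "j < j'" "j' \<in> RR' T \<tau>"
  shows "run_end T \<tau> j < j'"
proof (rule ccontr)
  assume "\<not> run_end T \<tau> j < j'"
  then have "j' - 1 \<in> RR T \<tau>" using in_RR_before_run_end[of j "j' - 1"] assms(1) by simp
  then show False using assms(2) by (simp add: RR'_def)
qed

lemma run_has_period:
  assumes j: "j \<in> RR T \<tau>"
  shows "has_period_on T (j - 1) (run_end T \<tau> j + 3 * \<tau> - 3) (window_per T \<tau> j)"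
proof -
  let ?p = "window_per T \<tau> j"
  note p = RR_window_period[OF j]
  have grow: "i < run_end T \<tau> j \<Longrightarrow> has_period_on T (j - 1) (i + 3 * \<tau> - 2) ?p"
    if "j \<le> i" for i
    using that
  proof (induction i rule: dec_induct)
    case base
    show ?case by (fact p(1))
  next
    case (step i)
    then have IH: "has_period_on T (j - 1) (i + 3 * \<tau> - 2) ?p" by simp
    have "Suc i \<in> RR T \<tau>" using in_RR_before_run_end[of j "Suc i"] step by simp
    note q = RR_window_period[OF this]
    have "has_period_on T i (i + 3 * \<tau> - 2 + 1) (window_per T \<tau> (Suc i))"
      by (rule has_period_on_mono[OF q(1)]) (use p(4) in auto)
    then have "has_period_on T (j - 1) (i + 3 * \<tau> - 2 + 1) ?p"
      by (rule has_period_on_extend_right[OF IH]) (use step p q in auto)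
    then show ?case by (rule has_period_on_mono) (use p(4) in auto)
  qed
  have "j \<le> run_end T \<tau> j - 1" "run_end T \<tau> j - 1 < run_end T \<tau> j"
    using run_end_gt[OF j] by auto
  from grow[OF this] show ?thesis by (rule has_period_on_mono) (use p(4) in auto)
qed

lemma rend_bounds:
  assumes j: "j \<in> RR T \<tau>"
  shows "j + 3 * \<tau> - 1 \<le> rend T \<tau> j" and "rend T \<tau> j \<le> length T + 1"
proof -
  have "j < run_end T \<tau> j" using run_end_gt[OF j] .
  moreover from this have "run_end T \<tau> j - 1 \<in> RR T \<tau>"
    using in_RR_before_run_end[of j "run_end T \<tau> j - 1"] by simp
  ultimately show "j + 3 * \<tau> - 1 \<le> rend T \<tau> j" "rend T \<tau> j \<le> length T + 1"
    unfolding rend_eq_run_end RR_def by auto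
qed

lemma per_run_factor:
  assumes j: "j \<in> RR T \<tau>"
  shows "per (sub T j (rend T \<tau> j)) = window_per T \<tau> j"
proof (rule antisym)
  let ?S = "sub T j (rend T \<tau> j)"
  note p = RR_window_period[OF j] and k = rend_bounds[OF j]
  have j1: "1 \<le> j" using j by (simp add: RR_def)
  have "rend T \<tau> j - 1 = run_end T \<tau> j + 3 * \<tau> - 3"
    unfolding rend_eq_run_end by simp
  then have "has_period_on T (j - 1) (rend T \<tau> j - 1) (window_per T \<tau> j)"
    using run_has_period[OF j] by simp
  moreover have "j \<le> rend T \<tau> j" using k(1) p(4) by simp
  ultimately have "has_period ?S (window_per T \<tau> j)"
    using has_period_sub_iff[OF j1 _ k(2)] by blast
  then show "per ?S \<le> window_per T \<tau> j" using per_le p(2) by blast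
  have "window_per T \<tau> j = per (take (j + 3 * \<tau> - 1 - j) ?S)"
    by (simp only: take_sub[OF k(1)])
  also have "\<dots> \<le> per ?S"
    using per_le[OF per_pos has_period_take[OF has_period_per]] .
  finally show "window_per T \<tau> j \<le> per ?S" .
qed

lemma Lroot_rotation:
  "\<exists>t < window_per T \<tau> j. Lroot T \<tau> j = sub T (j + t) (j + t + window_per T \<tau> j)"
proof -
  let ?p = "window_per T \<tau> j"
  have rotations: "{sub T (j + t) (j + t + ?p) | t. t < ?p} = (\<lambda>t. sub T (j + t) (j + t + ?p)) ` {..<?p}"
    by auto
  have "Lroot T \<tau> j \<in> {sub T (j + t) (j + t + ?p) | t. t < ?p}"
    unfolding Lroot_def Let_def rotations by (rule Min_in) (use per_pos in auto)
  then show ?thesis by blast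
qed

lemma Ltail_less_window_per:
  assumes j: "j \<in> RR T \<tau>"
  shows "Ltail T \<tau> j < window_per T \<tau> j"
proof -
  let ?p = "window_per T \<tau> j"
  define S where "S = sub T j (rend T \<tau> j)"
  note p = RR_window_period[OF j] and k = rend_bounds[OF j]
  have j1: "1 \<le> j" using j by (simp add: RR_def)
  have perS: "per S = ?p" unfolding S_def by (rule per_run_factor[OF j])
  have len: "2 * ?p \<le> length S"
    unfolding S_def using length_sub[OF j1 k(2)] k(1) p(3) by simp
  obtain t where t: "t < ?p" and Lroot: "Lroot T \<tau> j = sub T (j + t) (j + t + ?p)"
    using Lroot_rotation by blast
  have "t + ?p \<le> rend T \<tau> j - j"
    using t len length_sub[OF j1 k(2)] unfolding S_def by simp
  then have "Lroot T \<tau> j = take ?p (drop t S)"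
    unfolding Lroot S_def by (rule take_drop_sub[OF j1, symmetric])
  then have "Ltail T \<tau> j = (THE l. root_factorization S (take (per S) (drop t S)) l)"
    unfolding Ltail_def Let_def root_factorization_def S_def[symmetric] perS by simp
  also have "\<dots> = (length S - t) mod ?p"
    using the_root_factorization[of S t] len t perS by simp
  finally show ?thesis using p(2) by simp
qed

lemma efull_neq_of_less:
  assumes j: "j \<in> RR' T \<tau>" and j': "j' \<in> RR' T \<tau>" and "j < j'"
  shows "efull T \<tau> j \<noteq> efull T \<tau> j'"
proof
  assume eq: "efull T \<tau> j = efull T \<tau> j'"
  let ?e = "run_end T \<tau> j" and ?p' = "window_per T \<tau> j'"
  have jR: "j \<in> RR T \<tau>" and j'R: "j' \<in> RR T \<tau>" using j j' by (simp_all add: RR'_def)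
  note p' = RR_window_period[OF j'R]
  have "?e < j'" using run_end_less_RR'[OF \<open>j < j'\<close> j'] .
  have "j < ?e" using run_end_gt[OF jR] .
  then have last: "?e - 1 \<in> RR T \<tau>" using in_RR_before_run_end[of j "?e - 1"] by simp
  have "efull T \<tau> j \<le> ?e + 3 * \<tau> - 2"
    unfolding efull_def rend_eq_run_end by simp
  moreover have "j' + 3 * \<tau> - 1 \<le> rend T \<tau> j'" by (rule rend_bounds(1)[OF j'R])
  moreover have "rend T \<tau> j' < efull T \<tau> j' + ?p'"
    unfolding efull_def using Ltail_less_window_per[OF j'R] p'(3) calculation(2) by linarith
  ultimately have "j' < ?e - 1 + ?p'" using eq \<open>j < ?e\<close> p'(4) by linarith
  then have "Suc (?e - 1) \<in> RR T \<tau>"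
    using Suc_in_RR_of_overlap[OF last j'R] \<open>?e < j'\<close> by simp
  then show False using run_end_notin_RR \<open>j < ?e\<close> by simp
qed

theorem lemma5p14:
  fixes T :: "nat list" and \<sigma> :: nat and \<mu> :: real and \<tau> :: nat and j j' :: nat
  assumes "\<forall>c \<in> set T. c < \<sigma>"
    and "2 \<le> \<sigma>"
    and "real \<sigma> < real (length T) powr (1/7)"
    and "0 < \<mu>" and "\<mu> < 1/6"
    and "int \<tau> = \<lfloor>\<mu> * log (real \<sigma>) (real (length T))\<rfloor>"
    and "1 \<le> \<tau>"
    and "j \<in> RR' T \<tau>" and "j' \<in> RR' T \<tau>"
    and "j \<noteq> j'"
  shows "efull T \<tau> j \<noteq> efull T \<tau> j'"
  using efull_neq_of_less assms(8-10) by (metis linorder_neqE_nat)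

end
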